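(* Suppose that the cross-partial derivative $\nabla^2_{\psi\lambda}\ell(\psi,\lambda)$ of the assumed log-likelihood depends on the data only through a sufficient statistic $S=(S_1,\ldots,S_k)$, $1\le k\le n$, that it is additive in $S_1,\ldots,S_k$, and that $\mathbb{E}_m(S_j)=\mathbb{E}_{(\psi,\lambda)}(S_j)$ for all $j$. Then a sufficient condition for $\Psi\perp_m\Lambda$ is that $\check\imath_{\psi\lambda}(\psi,\lambda)=0$ for all $(\psi,\lambda)\in\Psi\times\Lambda$; similarly, $\check\imath_{\psi\lambda}=0$ at particular parameter values is sufficient for the corresponding local $m$-orthogonality.
   Context: Observations $Y=(Y_1,\ldots,Y_n)$ have true joint density $m$, depending on an interest parameter $\psi$. An assumed (possibly misspecified) model has joint density $\check m(y;\psi,\lambda)$, $(\psi,\lambda)\in\Psi\times\Lambda$, with log-likelihood $\ell(\psi,\lambda)=\log\check m(y;\psi,\lambda)$. $\mathbb{E}_m$ denotes expectation when $Y$ has density $m$, and $\mathbb{E}_{(\psi,\lambda)}$ denotes expectation under the assumed model. $\check\imath_{\psi\lambda}(\psi,\lambda)=\mathbb{E}_{(\psi,\lambda)}[-\nabla^2_{\psi\lambda}\ell(\psi,\lambda)]$. The notation $\Psi\perp_m\Lambda$ ($m$-orthogonality) means $\mathbb{E}_m[\nabla^2_{\psi\lambda}\ell(\psi,\lambda)]=0$ for all $(\psi,\lambda)\in\Psi\times\Lambda$; local $m$-orthogonality means this holds at particular values (e.g. $\Psi\perp_m\lambda$: at a given $\lambda$ for all $\psi$; $\psi\perp_m\Lambda$: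 at a given $\psi$ for all $\lambda$). *)

theory Defs
  imports "HOL-Analysis.Analysis"
begin

definition coord_pderiv :: "(real^'n \<Rightarrow> real) \<Rightarrow> 'n \<Rightarrow> real^'n \<Rightarrow> real" where
  "coord_pderiv f i x = deriv (\<lambda>t. f (x + t *\<^sub>R axis i 1)) 0"

definition cross_partial ::
  "(real^'p \<Rightarrow> real^'q \<Rightarrow> real) \<Rightarrow> real^'p \<Rightarrow> real^'q \<Rightarrow> real^'q^'p" where
  "cross_partial f psi lam =
     (\<chi> i j. coord_pderiv (\<lambda>psi'. coord_pderiv (\<lambda>lam'. f psi' lam') j lam) i psi)"

definition expect_dens ::
  "'y measure \<Rightarrow> ('y \<Rightarrow> real) \<Rightarrow> ('y \<Rightarrow> 'b::{banach,second_countable_topology}) \<Rightarrow> 'b" where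
  "expect_dens mu d f = (LINT y|mu. d y *\<^sub>R f y)"

definition loglik :: "('y \<Rightarrow> real^'p \<Rightarrow> real^'q \<Rightarrow> real) \<Rightarrow> 'y \<Rightarrow> real^'p \<Rightarrow> real^'q \<Rightarrow> real" where
  "loglik mc y psi lam = ln (mc y psi lam)"

definition info_cross ::
  "'y measure \<Rightarrow> ('y \<Rightarrow> real^'p \<Rightarrow> real^'q \<Rightarrow> real) \<Rightarrow> real^'p \<Rightarrow> real^'q \<Rightarrow> real^'q^'p" where
  "info_cross mu mc psi lam =
     expect_dens mu (\<lambda>y. mc y psi lam) (\<lambda>y. - cross_partial (loglik mc y) psi lam)"

text \<open>m-orthogonality of parameter sets A and B (global: A = Psi, B = Lambda;
  local versions: singletons).\<close>
definition m_orth ::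
  "'y measure \<Rightarrow> ('y \<Rightarrow> real) \<Rightarrow> ('y \<Rightarrow> real^'p \<Rightarrow> real^'q \<Rightarrow> real)
    \<Rightarrow> (real^'p) set \<Rightarrow> (real^'q) set \<Rightarrow> bool" where
  "m_orth mu m mc A B \<longleftrightarrow>
     (\<forall>psi\<in>A. \<forall>lam\<in>B. expect_dens mu m (\<lambda>y. cross_partial (loglik mc y) psi lam) = 0)"

text \<open>Fisher--Neyman factorization: S_0..S_(k-1) is sufficient for the assumed model.\<close>
definition sufficient_stat ::
  "('y \<Rightarrow> real^'p \<Rightarrow> real^'q \<Rightarrow> real) \<Rightarrow> nat \<Rightarrow> (nat \<Rightarrow> 'y \<Rightarrow> real) \<Rightarrow> bool" where
  "sufficient_stat mc k S \<longleftrightarrow>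
     (\<exists>g h. \<forall>y psi lam. mc y psi lam = g (map (\<lambda>j. S j y) [0..<k]) psi lam * h y)"

end

theory Submission
  imports Defs
begin

(* If the cross-partial derivative is affine in the statistics S_j, its expectation under any
  density depends on that density only through the means of the S_j. Hence, when the true density
  and the model share these means, the true expectation of the cross-partial equals the model one,
  which is minus the expected cross information; so vanishing information forces m-orthogonality. *)

lemma expect_dens_affine:
  fixes d :: "'y \<Rightarrow> real" and c :: "'b::{banach,second_countable_topology}"
  assumes "integrable mu d" "(LINT y|mu. d y) = 1"
    and "\<And>j. j < k \<Longrightarrow> integrable mu (\<lambda>y. d y * S j y)"
    and "\<And>y. y \<in> space mu \<Longrightarrow> f y = c + (\<Sum>j<k. S j y *\<^sub>R a j)"
  shows "expect_dens mu d f = c + (\<Sum>j<k. expect_dens mu d (S j) *\<^sub>R a j)"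
proof -
  have "expect_dens mu d f = (LINT y|mu. d y *\<^sub>R c + (\<Sum>j<k. (d y * S j y) *\<^sub>R a j))"
    unfolding expect_dens_def
    by (rule Bochner_Integration.integral_cong)
      (auto simp: assms(4) scaleR_add_right scaleR_sum_right)
  also have "\<dots> = (LINT y|mu. d y *\<^sub>R c) + (\<Sum>j<k. (LINT y|mu. (d y * S j y) *\<^sub>R a j))"
    using assms by (subst Bochner_Integration.integral_add)
      (auto intro!: Bochner_Integration.integral_sum integrable_scaleR_left
        Bochner_Integration.integrable_sum)
  also have "\<dots> = c + (\<Sum>j<k. expect_dens mu d (S j) *\<^sub>R a j)"
    using assms by (simp add: expect_dens_def)
  finally show ?thesis .
qed

lemma expect_dens_affine_eq_if_means_eq:
  fixes d d' :: "'y \<Rightarrow> real" and c :: "'b::{banach,second_countable_topology}"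
  assumes "integrable mu d" "(LINT y|mu. d y) = 1"
    and "integrable mu d'" "(LINT y|mu. d' y) = 1"
    and "\<And>j. j < k \<Longrightarrow> integrable mu (\<lambda>y. d y * S j y)"
    and "\<And>j. j < k \<Longrightarrow> integrable mu (\<lambda>y. d' y * S j y)"
    and "\<And>y. y \<in> space mu \<Longrightarrow> f y = c + (\<Sum>j<k. S j y *\<^sub>R a j)"
    and "\<And>j. j < k \<Longrightarrow> expect_dens mu d (S j) = expect_dens mu d' (S j)"
  shows "expect_dens mu d f = expect_dens mu d' f"
proof -
  have "expect_dens mu d f = c + (\<Sum>j<k. expect_dens mu d (S j) *\<^sub>R a j)"
    using assms(1,2,5,7) by (rule expect_dens_affine)
  also have "\<dots> = c + (\<Sum>j<k. expect_dens mu d' (S j) *\<^sub>R a j)"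
    using assms(8) by simp
  also have "\<dots> = expect_dens mu d' f"
    using assms(3,4,6,7) by (rule expect_dens_affine[symmetric])
  finally show ?thesis .
qed

lemma info_cross_eq_uminus_expect:
  "info_cross mu mc psi lam =
     - expect_dens mu (\<lambda>y. mc y psi lam) (\<lambda>y. cross_partial (loglik mc y) psi lam)"
  unfolding info_cross_def expect_dens_def by (simp add: scaleR_minus_right)

theorem corollary1:
  fixes mu :: "'y measure"
    and m :: "'y \<Rightarrow> real"
    and mc :: "'y \<Rightarrow> real^'p \<Rightarrow> real^'q \<Rightarrow> real"
    and Psi :: "(real^'p) set" and Lambda :: "(real^'q) set"
    and n k :: nat
    and S :: "nat \<Rightarrow> 'y \<Rightarrow> real"
  assumes m_meas: "m \<in> borel_measurable mu"
    and m_nonneg: "\<And>y. y \<in> space mu \<Longrightarrow> 0 \<le> m y"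
    and m_prob: "(LINT y|mu. m y) = 1" and m_int: "integrable mu m"
    and mc_meas: "\<And>psi lam. psi \<in> Psi \<Longrightarrow> lam \<in> Lambda \<Longrightarrow>
        (\<lambda>y. mc y psi lam) \<in> borel_measurable mu"
    and mc_pos: "\<And>y psi lam. y \<in> space mu \<Longrightarrow> psi \<in> Psi \<Longrightarrow> lam \<in> Lambda \<Longrightarrow>
        0 < mc y psi lam"
    and mc_prob: "\<And>psi lam. psi \<in> Psi \<Longrightarrow> lam \<in> Lambda \<Longrightarrow>
        integrable mu (\<lambda>y. mc y psi lam) \<and> (LINT y|mu. mc y psi lam) = 1"
    and k_range: "1 \<le> k" "k \<le> n"
    and S_meas: "\<And>j. j < k \<Longrightarrow> S j \<in> borel_measurable mu"
    and S_int_m: "\<And>j. j < k \<Longrightarrow> integrable mu (\<lambda>y. m y * S j y)"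
    and S_int_mc: "\<And>j psi lam. j < k \<Longrightarrow> psi \<in> Psi \<Longrightarrow> lam \<in> Lambda \<Longrightarrow>
        integrable mu (\<lambda>y. mc y psi lam * S j y)"
    and suff: "sufficient_stat mc k S"
    and additive: "\<exists>c a. \<forall>psi\<in>Psi. \<forall>lam\<in>Lambda. \<forall>y\<in>space mu.
        cross_partial (loglik mc y) psi lam = c psi lam + (\<Sum>j<k. S j y *\<^sub>R a j psi lam)"
    and means: "\<And>j psi lam. j < k \<Longrightarrow> psi \<in> Psi \<Longrightarrow> lam \<in> Lambda \<Longrightarrow>
        expect_dens mu m (S j) = expect_dens mu (\<lambda>y. mc y psi lam) (S j)"
  shows "\<forall>A B. A \<subseteq> Psi \<longrightarrow> B \<subseteq> Lambda \<longrightarrow>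
           (\<forall>psi\<in>A. \<forall>lam\<in>B. info_cross mu mc psi lam = 0) \<longrightarrow> m_orth mu m mc A B"
proof (intro allI impI)
  fix A B
  assume "A \<subseteq> Psi" "B \<subseteq> Lambda"
    and info_zero: "\<forall>psi\<in>A. \<forall>lam\<in>B. info_cross mu mc psi lam = 0"
  obtain c a where affine: "\<forall>psi\<in>Psi. \<forall>lam\<in>Lambda. \<forall>y\<in>space mu.
      cross_partial (loglik mc y) psi lam = c psi lam + (\<Sum>j<k. S j y *\<^sub>R a j psi lam)"
    using additive by blast
  show "m_orth mu m mc A B"
    unfolding m_orth_def
  proof (intro ballI)
    fix psi lam
    assume "psi \<in> A" "lam \<in> B"
    with \<open>A \<subseteq> Psi\<close> \<open>B \<subseteq> Lambda\<close> have "psi \<in> Psi" "lam \<in> Lambda" by auto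
    have "expect_dens mu m (\<lambda>y. cross_partial (loglik mc y) psi lam) =
        expect_dens mu (\<lambda>y. mc y psi lam) (\<lambda>y. cross_partial (loglik mc y) psi lam)"
      by (rule expect_dens_affine_eq_if_means_eq[where S = S])
        (use m_int m_prob S_int_m mc_prob S_int_mc affine means \<open>psi \<in> Psi\<close> \<open>lam \<in> Lambda\<close> in auto)
    also have "\<dots> = - info_cross mu mc psi lam"
      by (simp add: info_cross_eq_uminus_expect)
    also have "\<dots> = 0"
      using info_zero \<open>psi \<in> A\<close> \<open>lam \<in> B\<close> by simp
    finally show "expect_dens mu m (\<lambda>y. cross_partial (loglik mc y) psi lam) = 0" .
  qed
qed

end
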